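(* Let $X,X_1,X_2,\dots$ be i.i.d. nonnegative random variables with $\mathbb{E}[X]>0$ and $\mathbb{E}[X^2]<\infty$, and let $N_X(x)=\max\{k\ge0:\sum_{n=1}^kX_n\le x\}$ for $x\in\mathbb{R}$. Then for every $\delta>0$ there exist finite constants $\widetilde C=\widetilde C(\delta)>0$ and $\tilde c=\tilde c(\delta)>0$ such that $$\mathbb{P}\Big(N_X(x)-\frac{x}{\mathbb{E}[X]}>u\Big)\le\widetilde C\exp\{-\tilde c\,u^2/x\}\qquad\text{for all }x\ge0,\ 0\le u\le\delta x.$$ *)

theory Defs
  imports "HOL-Probability.Probability"
begin

text \<open>Renewal counting function N_X(x) = max{k >= 0 : X_1 + ... + X_k <= x},
  where the sequence X_1, X_2, ... is represented by X 0, X 1, ...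
  Valued in enat: it is infinite if the set of such k is unbounded
  (and 0 if the set is empty, which happens only for x < 0).\<close>
definition renewal_count :: "(nat \<Rightarrow> 'a \<Rightarrow> real) \<Rightarrow> real \<Rightarrow> 'a \<Rightarrow> enat" where
  "renewal_count X x \<omega> = (SUP k\<in>{k::nat. (\<Sum>n<k. X n \<omega>) \<le> x}. enat k)"

end

(*
  If N_X(x) exceeds x/\<mu> + u, then with k = \<lfloor>x/\<mu> + u\<rfloor> + 1 the partial sum S_k is
  still at most x, although its mean k\<mu> exceeds x by more than u\<mu>.  Nonnegative
  variables have a sub-Gaussian lower tail: e^(-y) \<le> 1 - y + y\<^sup>2/2 for y \<ge> 0 gives
  E e^(-tX) \<le> exp(-t\<mu> + t\<^sup>2 E[X\<^sup>2]/2), and Chernoff's bound then yields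
  P(S_k \<le> x) \<le> exp(-(k\<mu> - x)\<^sup>2 / (2k E[X\<^sup>2])).  For x \<ge> 1 we have k = O(x), which turns
  this into exp(-c u\<^sup>2/x); for x < 1 the factor C = exp(c \<delta>\<^sup>2) makes the bound exceed 1.
*)

theory Submission
  imports Defs
begin

lemma exp_neg_le_quadratic:
  fixes y :: real
  assumes "0 \<le> y"
  shows "exp (- y) \<le> 1 - y + y\<^sup>2 / 2"
proof -
  define f where "f z = 1 - z + z\<^sup>2 / 2 - exp (- z)" for z :: real
  have f': "(f has_real_derivative (exp (- z) - (1 - z))) (at z)" for z
    unfolding f_def by (auto intro!: derivative_eq_intros simp: power2_eq_square)
  have "f 0 \<le> f y"
    using exp_ge_add_one_self[of "- z" for z] f'
    by (intro DERIV_nonneg_imp_nondecreasing[OF assms]) fastforce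
  then show ?thesis
    by (simp add: f_def)
qed

lemma one_le_exp_mult_exp_neg_square_div:
  fixes c x u \<delta> :: real
  assumes "0 \<le> c" "0 \<le> x" "x \<le> 1" "0 \<le> u" "u \<le> \<delta> * x"
  shows "1 \<le> exp (c * \<delta>\<^sup>2) * exp (- c * u\<^sup>2 / x)"
proof -
  have "u\<^sup>2 / x \<le> \<delta>\<^sup>2"
  proof (cases "x = 0")
    case False
    have "u\<^sup>2 \<le> (\<delta> * x)\<^sup>2"
      using assms by (intro power_mono) auto
    then have "u\<^sup>2 / x \<le> \<delta>\<^sup>2 * x"
      using assms False by (simp add: field_simps power2_eq_square)
    also have "\<dots> \<le> \<delta>\<^sup>2"
      using assms by (simp add: mult_left_le)
    finally show ?thesis .
  qed simp
  then have "c * u\<^sup>2 / x \<le> c * \<delta>\<^sup>2"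
    using mult_left_mono[of "u\<^sup>2 / x" "\<delta>\<^sup>2" c] \<open>0 \<le> c\<close> by simp
  then show ?thesis
    by (simp add: exp_add[symmetric])
qed

lemma renewal_count_le_if_sum_gt:
  fixes X :: "nat \<Rightarrow> 'a \<Rightarrow> real"
  assumes nonneg: "\<And>n. 0 \<le> X n \<omega>"
    and sum_gt: "x < (\<Sum>n<Suc k. X n \<omega>)"
  shows "renewal_count X x \<omega> \<le> enat k"
  unfolding renewal_count_def
proof (rule SUP_least)
  fix j assume "j \<in> {j. (\<Sum>n<j. X n \<omega>) \<le> x}"
  with sum_gt have "\<not> (\<Sum>n<Suc k. X n \<omega>) \<le> (\<Sum>n<j. X n \<omega>)"
    by simp
  then have "j < Suc k"
    using sum_mono2[of "{..<j}" "{..<Suc k}" "\<lambda>n. X n \<omega>"] nonneg by fastforce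
  then show "enat j \<le> enat k"
    by simp
qed

lemma sum_le_if_renewal_excess:
  fixes X :: "nat \<Rightarrow> 'a \<Rightarrow> real"
  assumes nonneg: "\<And>n. 0 \<le> X n \<omega>"
    and "0 \<le> a + u"
    and excess: "ereal u < ereal_of_enat (renewal_count X x \<omega>) - ereal a"
  shows "(\<Sum>n<nat \<lfloor>a + u\<rfloor> + 1. X n \<omega>) \<le> x"
proof (rule ccontr)
  assume "\<not> (\<Sum>n<nat \<lfloor>a + u\<rfloor> + 1. X n \<omega>) \<le> x"
  then have "renewal_count X x \<omega> \<le> enat (nat \<lfloor>a + u\<rfloor>)"
    by (intro renewal_count_le_if_sum_gt) (use nonneg in auto)
  then obtain j where j: "renewal_count X x \<omega> = enat j" "j \<le> nat \<lfloor>a + u\<rfloor>"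
    by (cases "renewal_count X x \<omega>") auto
  then have "real j \<le> a + u"
    using \<open>0 \<le> a + u\<close> by linarith
  with excess j(1) show False
    by simp
qed

context prob_space
begin

lemma expectation_exp_neg_le:
  fixes Y :: "'a \<Rightarrow> real"
  assumes [measurable]: "Y \<in> borel_measurable M"
    and nonneg: "\<And>\<omega>. \<omega> \<in> space M \<Longrightarrow> 0 \<le> Y \<omega>"
    and square_integrable: "integrable M (\<lambda>\<omega>. (Y \<omega>)\<^sup>2)"
    and t: "0 \<le> t"
  shows "expectation (\<lambda>\<omega>. exp (- t * Y \<omega>))
           \<le> exp (- t * expectation Y + t\<^sup>2 * expectation (\<lambda>\<omega>. (Y \<omega>)\<^sup>2) / 2)"
proof -
  have Y: "integrable M Y"
    by (rule square_integrable_imp_integrable) (use square_integrable in auto)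
  have "expectation (\<lambda>\<omega>. exp (- t * Y \<omega>))
          \<le> expectation (\<lambda>\<omega>. 1 - t * Y \<omega> + t\<^sup>2 / 2 * (Y \<omega>)\<^sup>2)"
  proof (rule integral_mono)
    show "integrable M (\<lambda>\<omega>. exp (- t * Y \<omega>))"
      by (rule integrable_const_bound[where B = 1]) (use t nonneg in auto)
    fix \<omega> assume "\<omega> \<in> space M"
    then show "exp (- t * Y \<omega>) \<le> 1 - t * Y \<omega> + t\<^sup>2 / 2 * (Y \<omega>)\<^sup>2"
      using exp_neg_le_quadratic[of "t * Y \<omega>"] t nonneg by (simp add: power_mult_distrib)
  qed (use Y square_integrable in auto)
  also have "\<dots> = 1 + (- t * expectation Y + t\<^sup>2 * expectation (\<lambda>\<omega>. (Y \<omega>)\<^sup>2) / 2)"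
    using Y square_integrable by (simp add: prob_space)
  also have "\<dots> \<le> exp (- t * expectation Y + t\<^sup>2 * expectation (\<lambda>\<omega>. (Y \<omega>)\<^sup>2) / 2)"
    by (rule exp_ge_add_one_self)
  finally show ?thesis .
qed

lemma expectation_exp_neg_sum_iid:
  fixes X :: "nat \<Rightarrow> 'a \<Rightarrow> real"
  assumes [measurable]: "\<And>n. X n \<in> borel_measurable M"
    and indep: "indep_vars (\<lambda>_. borel) X {..<k}"
    and ident: "\<And>n. n < k \<Longrightarrow> distr M borel (X n) = distr M borel (X 0)"
    and nonneg: "\<And>n \<omega>. \<omega> \<in> space M \<Longrightarrow> 0 \<le> X n \<omega>"
    and t: "0 \<le> t"
  shows "expectation (\<lambda>\<omega>. exp (- t * (\<Sum>n<k. X n \<omega>)))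
           = expectation (\<lambda>\<omega>. exp (- t * X 0 \<omega>)) ^ k"
proof -
  have bounded: "integrable M (\<lambda>\<omega>. exp (- t * X n \<omega>))" for n
    by (rule integrable_const_bound[where B = 1]) (use t nonneg in auto)
  have indep_exp: "indep_vars (\<lambda>_. borel) (\<lambda>n \<omega>. exp (- t * X n \<omega>)) {..<k}"
    by (rule indep_vars_compose2[OF indep]) auto
  have same_mean: "expectation (\<lambda>\<omega>. exp (- t * X n \<omega>)) = expectation (\<lambda>\<omega>. exp (- t * X 0 \<omega>))"
    if "n < k" for n
  proof -
    have "expectation (\<lambda>\<omega>. exp (- t * X n \<omega>)) = integral\<^sup>L (distr M borel (X n)) (\<lambda>y. exp (- t * y))"
      by (subst integral_distr) auto
    also have "\<dots> = integral\<^sup>L (distr M borel (X 0)) (\<lambda>y. exp (- t * y))"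
      using ident[OF that] by simp
    also have "\<dots> = expectation (\<lambda>\<omega>. exp (- t * X 0 \<omega>))"
      by (subst integral_distr) auto
    finally show ?thesis .
  qed
  have "expectation (\<lambda>\<omega>. exp (- t * (\<Sum>n<k. X n \<omega>)))
          = expectation (\<lambda>\<omega>. \<Prod>n<k. exp (- t * X n \<omega>))"
    by (simp add: exp_sum[symmetric] sum_distrib_left)
  also have "\<dots> = (\<Prod>n<k. expectation (\<lambda>\<omega>. exp (- t * X n \<omega>)))"
    by (rule indep_vars_lebesgue_integral[OF finite_lessThan indep_exp bounded])
  also have "\<dots> = (\<Prod>n<k. expectation (\<lambda>\<omega>. exp (- t * X 0 \<omega>)))"
    by (intro prod.cong refl same_mean) simp
  also have "\<dots> = expectation (\<lambda>\<omega>. exp (- t * X 0 \<omega>)) ^ k"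
    by simp
  finally show ?thesis .
qed

lemma prob_sum_le_below_mean:
  fixes X :: "nat \<Rightarrow> 'a \<Rightarrow> real"
  assumes [measurable]: "\<And>n. X n \<in> borel_measurable M"
    and indep: "indep_vars (\<lambda>_. borel) X {..<k}"
    and ident: "\<And>n. n < k \<Longrightarrow> distr M borel (X n) = distr M borel (X 0)"
    and nonneg: "\<And>n \<omega>. \<omega> \<in> space M \<Longrightarrow> 0 \<le> X n \<omega>"
    and square_integrable: "integrable M (\<lambda>\<omega>. (X 0 \<omega>)\<^sup>2)"
    and s: "expectation (\<lambda>\<omega>. (X 0 \<omega>)\<^sup>2) \<le> s" "0 < s"
    and below_mean: "x < real k * expectation (X 0)"
  shows "prob {\<omega> \<in> space M. (\<Sum>n<k. X n \<omega>) \<le> x}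
           \<le> exp (- (real k * expectation (X 0) - x)\<^sup>2 / (2 * real k * s))"
proof (cases "k = 0")
  case True
  with below_mean show ?thesis by simp
next
  case False
  define \<mu> where "\<mu> = expectation (X 0)"
  define D where "D = real k * \<mu> - x"
  \<comment> \<open>the minimiser of the Chernoff exponent below\<close>
  define t where "t = D / (real k * s)"
  have t: "0 < t"
    using False below_mean s by (simp add: t_def D_def \<mu>_def)
  have "prob {\<omega> \<in> space M. (\<Sum>n<k. X n \<omega>) \<le> x}
          \<le> exp (t * x) * expectation (\<lambda>\<omega>. exp (- t * (\<Sum>n<k. X n \<omega>)))"
  proof -
    have bounded: "integrable M (\<lambda>\<omega>. exp (- t * (\<Sum>n<k. X n \<omega>)))"
      by (rule integrable_const_bound[where B = 1])
         (use t nonneg in \<open>auto intro!: AE_I2 mult_nonneg_nonneg sum_nonneg\<close>)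
    then have "set_integrable M (space M) (\<lambda>\<omega>. exp (- t * (\<Sum>n<k. X n \<omega>)))"
      unfolding set_integrable_def by (rule integrable_mult_indicator[OF sets.top])
    from Chernoff_ineq_le[OF t this] bounded show ?thesis
      by (simp add: set_integral_space)
  qed
  also have "\<dots> = exp (t * x) * expectation (\<lambda>\<omega>. exp (- t * X 0 \<omega>)) ^ k"
    using expectation_exp_neg_sum_iid[OF _ indep ident nonneg] t by simp
  also have "\<dots> \<le> exp (t * x) * exp (- t * \<mu> + t\<^sup>2 * s / 2) ^ k"
  proof (intro mult_left_mono power_mono integral_nonneg_AE)
    have "expectation (\<lambda>\<omega>. exp (- t * X 0 \<omega>))
            \<le> exp (- t * \<mu> + t\<^sup>2 * expectation (\<lambda>\<omega>. (X 0 \<omega>)\<^sup>2) / 2)"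
      unfolding \<mu>_def
      by (rule expectation_exp_neg_le) (use nonneg square_integrable t in auto)
    also have "\<dots> \<le> exp (- t * \<mu> + t\<^sup>2 * s / 2)"
      using s by (simp add: mult_left_mono)
    finally show "expectation (\<lambda>\<omega>. exp (- t * X 0 \<omega>)) \<le> exp (- t * \<mu> + t\<^sup>2 * s / 2)" .
  qed auto
  also have "\<dots> = exp (t * x + real k * (- t * \<mu> + t\<^sup>2 * s / 2))"
    by (simp add: exp_of_nat_mult[symmetric] exp_add)
  also have "t * x + real k * (- t * \<mu> + t\<^sup>2 * s / 2) = - D\<^sup>2 / (2 * real k * s)"
    using False s by (simp add: t_def D_def field_simps power2_eq_square)
  finally show ?thesis
    by (simp add: D_def \<mu>_def)
qed

lemma prob_renewal_excess_le:
  fixes X :: "nat \<Rightarrow> 'a \<Rightarrow> real"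
  assumes [measurable]: "\<And>n. X n \<in> borel_measurable M"
    and indep: "indep_vars (\<lambda>_. borel) X UNIV"
    and ident: "\<And>n. distr M borel (X n) = distr M borel (X 0)"
    and nonneg: "\<And>n \<omega>. \<omega> \<in> space M \<Longrightarrow> 0 \<le> X n \<omega>"
    and square_integrable: "integrable M (\<lambda>\<omega>. (X 0 \<omega>)\<^sup>2)"
    and mean_pos: "0 < expectation (X 0)"
    and s: "expectation (\<lambda>\<omega>. (X 0 \<omega>)\<^sup>2) \<le> s" "0 < s"
    and x: "1 \<le> x" and u: "0 \<le> u" "u \<le> \<delta> * x"
  shows "prob {\<omega> \<in> space M.
                 ereal u < ereal_of_enat (renewal_count X x \<omega>) - ereal (x / expectation (X 0))}
           \<le> exp (- ((expectation (X 0))\<^sup>2 / (2 * s * (1 / expectation (X 0) + \<delta> + 1))) * u\<^sup>2 / x)"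
proof -
  define \<mu> where "\<mu> = expectation (X 0)"
  define A where "A = 1 / \<mu> + \<delta> + 1"
  define k where "k = nat \<lfloor>x / \<mu> + u\<rfloor> + 1"
  have "0 \<le> \<delta> * x"
    using u by linarith
  with x have "0 \<le> \<delta>"
    by (simp add: zero_le_mult_iff)
  have k_gt: "x / \<mu> + u < real k" and k_le: "real k \<le> A * x"
    using x u \<open>0 \<le> \<delta>\<close> mean_pos
    by (auto simp: k_def A_def \<mu>_def of_nat_nat algebra_simps) linarith+
  have k_pos: "0 < real k"
    by (simp add: k_def)
  have excess_gt: "u * \<mu> < real k * \<mu> - x"
    using k_gt mean_pos by (simp add: \<mu>_def field_simps)
  have below_mean: "x < real k * \<mu>"
    using excess_gt mult_nonneg_nonneg[OF u(1), of \<mu>] mean_pos by (simp add: \<mu>_def)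
  have "prob {\<omega> \<in> space M. ereal u < ereal_of_enat (renewal_count X x \<omega>) - ereal (x / \<mu>)}
          \<le> prob {\<omega> \<in> space M. (\<Sum>n<k. X n \<omega>) \<le> x}"
    using sum_le_if_renewal_excess[of X _ "x / \<mu>" u x] nonneg x u mean_pos
    by (intro finite_measure_mono) (auto simp: k_def \<mu>_def)
  also have "\<dots> \<le> exp (- (real k * \<mu> - x)\<^sup>2 / (2 * real k * s))"
    unfolding \<mu>_def
    by (rule prob_sum_le_below_mean[OF _ indep_vars_subset[OF indep] ident nonneg square_integrable s])
       (use below_mean in \<open>simp_all add: \<mu>_def\<close>)
  also have "\<dots> \<le> exp (- (\<mu>\<^sup>2 / (2 * s * A)) * u\<^sup>2 / x)"
  proof -
    have "(u * \<mu>)\<^sup>2 / (2 * s * (A * x)) \<le> (real k * \<mu> - x)\<^sup>2 / (2 * s * real k)"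
      using excess_gt k_le k_pos u mean_pos s x
      by (intro frac_le power_mono) (auto simp: \<mu>_def intro!: mult_pos_pos)
    then show ?thesis
      by (simp add: power_mult_distrib field_simps)
  qed
  finally show ?thesis
    by (simp add: \<mu>_def A_def)
qed

end

theorem lemmaA9:
  fixes M :: "'a measure" and X :: "nat \<Rightarrow> 'a \<Rightarrow> real"
  assumes "prob_space M"
    and meas: "\<And>n. X n \<in> borel_measurable M"
    and indep: "prob_space.indep_vars M (\<lambda>_. borel) X UNIV"
    and ident: "\<And>n. distr M borel (X n) = distr M borel (X 0)"
    and nonneg: "\<And>n \<omega>. \<omega> \<in> space M \<Longrightarrow> X n \<omega> \<ge> 0"
    and mean_pos: "integral\<^sup>L M (X 0) > 0"
    and second_moment: "integrable M (\<lambda>\<omega>. (X 0 \<omega>)\<^sup>2)"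
  shows "\<forall>\<delta>>0. \<exists>C>0. \<exists>c>0. \<forall>x u. 0 \<le> x \<longrightarrow> 0 \<le> u \<longrightarrow> u \<le> \<delta> * x \<longrightarrow>
           measure M {\<omega> \<in> space M.
              ereal_of_enat (renewal_count X x \<omega>) - ereal (x / integral\<^sup>L M (X 0)) > ereal u}
           \<le> C * exp (- c * u\<^sup>2 / x)"
proof (intro allI impI)
  interpret prob_space M by fact
  fix \<delta> :: real assume "0 < \<delta>"
  define s where "s = expectation (\<lambda>\<omega>. (X 0 \<omega>)\<^sup>2) + 1"
  define c where "c = (expectation (X 0))\<^sup>2 / (2 * s * (1 / expectation (X 0) + \<delta> + 1))"
  have "0 < s"
    by (simp add: s_def add_nonneg_pos)
  then have "0 < c"
    using mean_pos \<open>0 < \<delta>\<close> by (auto simp: c_def intro!: divide_pos_pos mult_pos_pos add_pos_pos)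
  let ?excess = "\<lambda>x u. {\<omega> \<in> space M.
                  ereal_of_enat (renewal_count X x \<omega>) - ereal (x / expectation (X 0)) > ereal u}"
  show "\<exists>C>0. \<exists>c>0. \<forall>x u. 0 \<le> x \<longrightarrow> 0 \<le> u \<longrightarrow> u \<le> \<delta> * x \<longrightarrow>
          prob (?excess x u) \<le> C * exp (- c * u\<^sup>2 / x)"
  proof (rule exI[of _ "exp (c * \<delta>\<^sup>2)"], intro conjI exI[of _ c] allI impI)
    fix x u :: real assume x: "0 \<le> x" and u: "0 \<le> u" "u \<le> \<delta> * x"
    show "prob (?excess x u) \<le> exp (c * \<delta>\<^sup>2) * exp (- c * u\<^sup>2 / x)"
    proof (cases "x < 1")
      case True
      with x u \<open>0 < c\<close> have "1 \<le> exp (c * \<delta>\<^sup>2) * exp (- c * u\<^sup>2 / x)"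
        by (intro one_le_exp_mult_exp_neg_square_div) auto
      with prob_le_1 show ?thesis
        by (rule order_trans)
    next
      case False
      then have "prob (?excess x u) \<le> exp (- c * u\<^sup>2 / x)"
        unfolding c_def
        by (intro prob_renewal_excess_le[OF meas indep ident nonneg second_moment mean_pos _ \<open>0 < s\<close>])
           (use u in \<open>auto simp: s_def\<close>)
      also have "\<dots> \<le> exp (c * \<delta>\<^sup>2) * exp (- c * u\<^sup>2 / x)"
        using \<open>0 < c\<close> by simp
      finally show ?thesis .
    qed
  qed (use \<open>0 < c\<close> in auto)
qed

end
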